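(* Let $X\in\mathbb{R}^n$ be arbitrary, $k\in[n]$, and let $\widehat\theta^{(k)}$ be any minimizer of $\|X-\theta\|^2$ over $\Theta_k^\uparrow$; let $\widehat\theta^{(n)}$ be the minimizer over $\Theta_n^\uparrow$. Let $0=\widehat a_0<\widehat a_1<\cdots<\widehat a_m=n$ be such that $(\widehat a_{j-1}:\widehat a_j]$, $j\in[m]$, are the maximal blocks of consecutive indices on which $\widehat\theta^{(k)}$ is constant, and let $\widehat A_k=\{\widehat a_1,\dots,\widehat a_m\}$ (similarly $\widehat A_n$ for $\widehat\theta^{(n)}$). Then: 1. For each $j\in[m]$, $\widehat{\theta}_i^{(k)}=\overline{X}_{(\widehat{a}_{j-1}:\widehat{a}_j]}$ for all $i\in(\widehat{a}_{j-1}:\widehat{a}_j]$. 2. For each $j\in[m-1]$ and all integers $0\leq s<\widehat{a}_j<t\leq n$, $$\overline{X}_{(s:\widehat{a}_j]}<\frac{\widehat{\theta}_{\widehat{a}_j}^{(k)}+\widehat{\theta}^{(k)}_{\widehat{a}_{j+1}}}{2}<\overline{X}_{(\widehat{a}_j:t]};$$ consequently $\widehat{\theta}_{\widehat{a}_j}^{(n)}<\frac{\widehat{\theta}^{(k)}_{\widehat{a}_j}+\widehat{\theta}^{(k)}_{\widehat{a}_{j+1}}}{2}<\widehat{\theta}_{\widehat{a}_j+1}^{(n)}$. 3. $\widehat{A}_k\subset\widehat{A}_n$.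
   Context: $[n]=\{1,\dots,n\}$. For reals $a\le b$, $(a:b]$ is the set of integers $i$ with $a<i\le b$; for nonempty $J$, $\overline X_J=|J|^{-1}\sum_{i\in J}X_i$. For $k\in[n]$, $\Theta_k^{\uparrow}$ is the set of $\theta\in\mathbb{R}^n$ for which there exist integers $0=a_0\le\cdots\le a_k=n$ and reals $\mu_1\le\cdots\le\mu_k$ with $\theta_i=\mu_j$ for all $i\in(a_{j-1}:a_j]$; $\Theta_n^\uparrow$ is the set of all nondecreasing vectors. *)

theory Defs
  imports Complex_Main
begin

text \<open>Vectors in R^n are modelled as functions nat => real; only the
  coordinates 1..n are relevant.\<close>

definition sqdist :: "nat \<Rightarrow> (nat \<Rightarrow> real) \<Rightarrow> (nat \<Rightarrow> real) \<Rightarrow> real" where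
  "sqdist n X \<theta> = (\<Sum>i\<in>{1..n}. (X i - \<theta> i)^2)"

definition Theta_up :: "nat \<Rightarrow> nat \<Rightarrow> (nat \<Rightarrow> real) set" where
  "Theta_up n k = {\<theta>. \<exists>(a::nat \<Rightarrow> nat) (\<mu>::nat \<Rightarrow> real).
      a 0 = 0 \<and> a k = n \<and> (\<forall>j<k. a j \<le> a (Suc j)) \<and>
      (\<forall>j\<in>{1..<k}. \<mu> j \<le> \<mu> (Suc j)) \<and>
      (\<forall>j\<in>{1..k}. \<forall>i\<in>{a (j-1)<..a j}. \<theta> i = \<mu> j)}"

definition Theta_mono :: "nat \<Rightarrow> (nat \<Rightarrow> real) set" where
  "Theta_mono n = {\<theta>. \<forall>i j. 1 \<le> i \<longrightarrow> i \<le> j \<longrightarrow> j \<le> n \<longrightarrow> \<theta> i \<le> \<theta> j}"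

definition is_minimizer :: "nat \<Rightarrow> (nat \<Rightarrow> real) \<Rightarrow> (nat \<Rightarrow> real) set \<Rightarrow> (nat \<Rightarrow> real) \<Rightarrow> bool" where
  "is_minimizer n X S \<theta> \<longleftrightarrow> \<theta> \<in> S \<and> (\<forall>\<theta>'\<in>S. sqdist n X \<theta> \<le> sqdist n X \<theta>')"

definition block_ends :: "nat \<Rightarrow> (nat \<Rightarrow> real) \<Rightarrow> nat set" where
  "block_ends n \<theta> = {i\<in>{1..n}. i = n \<or> \<theta> i \<noteq> \<theta> (Suc i)}"

definition avg :: "(nat \<Rightarrow> real) \<Rightarrow> nat \<Rightarrow> nat \<Rightarrow> real" where
  "avg X s t = (\<Sum>i\<in>{s<..t}. X i) / real (t - s)"

end

theory Submission
  imports Defs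
begin

text \<open>
  All three statements come from comparing the minimizer with admissible competitors.
  Shifting one block of \<open>\<theta>k\<close> up or down stays inside \<open>Theta_up n k\<close> (its levels increase
  strictly), so by first-order optimality every level is the mean of \<open>X\<close> over its block.
  Moving the breakpoint \<open>a j\<close> to a point \<open>p\<close> inside one of the two neighbouring blocks, and
  giving the moved points the level of the other block, is again admissible; comparing costs
  shows that \<open>X\<close> averages below the midpoint \<open>(\<theta>k (a j) + \<theta>k (a (Suc j))) / 2\<close> on \<open>(p:a j]\<close>
  and above it on \<open>(a j:p]\<close>. Equality would make the competitor a minimizer whose enlarged
  block has the wrong mean, so the inequalities are strict; adding whole blocks, whose means
  lie on the correct side of the midpoint, extends them to all \<open>s < a j < t\<close>. Finally, the
  isotonic fit \<open>\<theta>n\<close> satisfies \<open>\<theta>n i \<le> avg X s i\<close> and \<open>avg X i t \<le> \<theta>n (Suc i)\<close> for some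
  \<open>s < i < t\<close> (lower resp. raise the adjacent part of its level set), so it jumps across the
  midpoint at every \<open>a j\<close>.
\<close>

lemma sum_greaterThanAtMost_split:
  fixes f :: "nat \<Rightarrow> 'a::comm_monoid_add"
  assumes "s \<le> u" "u \<le> t"
  shows "sum f {s<..t} = sum f {s<..u} + sum f {u<..t}"
proof -
  have "{s<..t} = {s<..u} \<union> {u<..t}" using assms by auto
  then show ?thesis by (simp add: sum.union_disjoint ivl_disj_int)
qed

lemma sqdist_diff:
  assumes "A \<subseteq> {1..n}" "\<forall>i\<in>{1..n} - A. \<theta>' i = \<theta> i"
  shows "sqdist n X \<theta>' - sqdist n X \<theta> = (\<Sum>i\<in>A. (X i - \<theta>' i)\<^sup>2 - (X i - \<theta> i)\<^sup>2)"
proof -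
  have "sqdist n X \<theta>' - sqdist n X \<theta> = (\<Sum>i\<in>{1..n}. (X i - \<theta>' i)\<^sup>2 - (X i - \<theta> i)\<^sup>2)"
    by (simp add: sqdist_def sum_subtractf)
  also have "\<dots> = (\<Sum>i\<in>A. (X i - \<theta>' i)\<^sup>2 - (X i - \<theta> i)\<^sup>2)"
    using assms by (intro sum.mono_neutral_right) auto
  finally show ?thesis .
qed

lemma sum_square_diff_const:
  "(\<Sum>i\<in>{s<..t}. (X i - b)\<^sup>2 - (X i - (a::real))\<^sup>2)
     = (a - b) * (2 * sum X {s<..t} - real (t - s) * (a + b))"
proof -
  have "(\<Sum>i\<in>{s<..t}. (X i - b)\<^sup>2 - (X i - a)\<^sup>2) = (\<Sum>i\<in>{s<..t}. (a - b) * (2 * X i - (a + b)))"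
    by (rule sum.cong) (auto simp: power2_eq_square algebra_simps)
  also have "\<dots> = (a - b) * (\<Sum>i\<in>{s<..t}. 2 * X i - (a + b))"
    by (simp add: sum_distrib_left)
  also have "(\<Sum>i\<in>{s<..t}. 2 * X i - (a + b)) = 2 * sum X {s<..t} - real (t - s) * (a + b)"
    by (simp add: sum_subtractf sum_distrib_left)
  finally show ?thesis .
qed

lemma avg_less_iff: "s < t \<Longrightarrow> avg X s t < c \<longleftrightarrow> sum X {s<..t} < real (t - s) * c"
  by (simp add: avg_def divide_less_eq mult.commute)

lemma avg_greater_iff: "s < t \<Longrightarrow> c < avg X s t \<longleftrightarrow> real (t - s) * c < sum X {s<..t}"
  by (simp add: avg_def less_divide_eq mult.commute)

lemma avg_ge_iff: "s < t \<Longrightarrow> c \<le> avg X s t \<longleftrightarrow> real (t - s) * c \<le> sum X {s<..t}"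
  by (simp add: avg_def le_divide_eq mult.commute)

lemma avg_le_iff: "s < t \<Longrightarrow> avg X s t \<le> c \<longleftrightarrow> sum X {s<..t} \<le> real (t - s) * c"
  by (simp add: avg_def divide_le_eq mult.commute)

text \<open>Shifting the level interval \<open>(s:t]\<close> by \<open>\<sigma>\<epsilon>\<close> changes \<open>sqdist\<close> by
  \<open>\<epsilon>\<^sup>2\<sigma>\<^sup>2(t - s) - 2\<epsilon>\<sigma>(\<Sigma>X - (t - s)v)\<close>, which is negative for small \<open>\<epsilon>\<close> unless
  the claim holds.\<close>
lemma minimizer_interval_first_order:
  assumes min: "is_minimizer n X S \<theta>" and "\<delta> > 0" and "t \<le> n"
    and level: "\<And>i. s < i \<Longrightarrow> i \<le> t \<Longrightarrow> \<theta> i = v"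
    and shift: "\<And>\<epsilon>. 0 < \<epsilon> \<Longrightarrow> \<epsilon> < \<delta> \<Longrightarrow>
                  (\<lambda>i. if s < i \<and> i \<le> t then v + \<sigma> * \<epsilon> else \<theta> i) \<in> S"
  shows "\<sigma> * (sum X {s<..t} - real (t - s) * v) \<le> 0"
proof (rule ccontr)
  define A where "A = \<sigma> * (sum X {s<..t} - real (t - s) * v)"
  define B where "B = real (t - s) * \<sigma>\<^sup>2"
  assume "\<not> ?thesis"
  then have A: "A > 0" by (simp add: A_def)
  have B: "B \<ge> 0" by (simp add: B_def)
  define \<epsilon> where "\<epsilon> = min (\<delta> / 2) (A / (B + 1))"
  have \<epsilon>: "0 < \<epsilon>" "\<epsilon> < \<delta>" using A B \<open>\<delta> > 0\<close> by (auto simp: \<epsilon>_def)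
  define \<theta>' where "\<theta>' = (\<lambda>i. if s < i \<and> i \<le> t then v + \<sigma> * \<epsilon> else \<theta> i)"
  have "sqdist n X \<theta>' - sqdist n X \<theta> = (\<Sum>i\<in>{s<..t}. (X i - (v + \<sigma> * \<epsilon>))\<^sup>2 - (X i - v)\<^sup>2)"
    using \<open>t \<le> n\<close> by (subst sqdist_diff[of "{s<..t}"]) (auto simp: \<theta>'_def level intro!: sum.cong)
  also have "\<dots> = (v - (v + \<sigma> * \<epsilon>)) * (2 * sum X {s<..t} - real (t - s) * (v + (v + \<sigma> * \<epsilon>)))"
    by (rule sum_square_diff_const)
  also have "\<dots> = \<epsilon>\<^sup>2 * B - 2 * \<epsilon> * A"
    by (simp add: A_def B_def power2_eq_square algebra_simps)
  finally have diff: "sqdist n X \<theta>' - sqdist n X \<theta> = \<epsilon>\<^sup>2 * B - 2 * \<epsilon> * A" .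
  have "\<theta>' \<in> S" using shift[OF \<epsilon>] by (simp add: \<theta>'_def)
  then have "sqdist n X \<theta> \<le> sqdist n X \<theta>'" using min by (simp add: is_minimizer_def)
  then have "2 * \<epsilon> * A \<le> \<epsilon>\<^sup>2 * B" using diff by simp
  then have "2 * A \<le> \<epsilon> * B" using \<epsilon> by (simp add: power2_eq_square)
  moreover have "\<epsilon> * B \<le> A / (B + 1) * B" using B by (intro mult_right_mono) (auto simp: \<epsilon>_def)
  moreover have "A / (B + 1) * B < 2 * A" using A B by (simp add: field_simps) (smt (verit) mult_nonneg_nonneg)
  ultimately show False by linarith
qed

lemma Theta_mono_replace_interval:
  assumes mono: "\<theta> \<in> Theta_mono n" and left: "s = 0 \<or> \<theta> s \<le> w" and right: "t = n \<or> w \<le> \<theta> (Suc t)"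
  shows "(\<lambda>i. if s < i \<and> i \<le> t then w else \<theta> i) \<in> Theta_mono n"
  unfolding Theta_mono_def
proof (intro CollectI allI impI)
  fix x y assume xy: "1 \<le> x" "x \<le> y" "y \<le> n"
  have le: "\<theta> u \<le> \<theta> v" if "1 \<le> u" "u \<le> v" "v \<le> n" for u v
    using mono that by (simp add: Theta_mono_def)
  consider "s < x \<and> x \<le> t" "\<not> (s < y \<and> y \<le> t)" | "\<not> (s < x \<and> x \<le> t)" "s < y \<and> y \<le> t"
    | "(s < x \<and> x \<le> t) = (s < y \<and> y \<le> t)" by blast
  then show "(if s < x \<and> x \<le> t then w else \<theta> x) \<le> (if s < y \<and> y \<le> t then w else \<theta> y)"
  proof cases
    case 1
    then have "w \<le> \<theta> (Suc t)" "\<theta> (Suc t) \<le> \<theta> y" using right xy by (auto intro: le)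
    then show ?thesis using 1 by simp
  next
    case 2
    then have "\<theta> x \<le> \<theta> s" "\<theta> s \<le> w" using left xy by (auto intro: le)
    then show ?thesis using 2 by simp
  next
    case 3
    then show ?thesis using xy le by auto
  qed
qed

text \<open>Lowering the part of the level set of \<open>\<theta> i\<close> that ends at \<open>i\<close> keeps the fit monotone.\<close>
lemma isotonic_minimizer_le_avg_left:
  assumes min: "is_minimizer n X (Theta_mono n) \<theta>" and i: "1 \<le> i" "i \<le> n"
  shows "\<exists>s<i. \<theta> i \<le> avg X s i"
proof -
  have mono: "\<theta> \<in> Theta_mono n" using min by (simp add: is_minimizer_def)
  define s where "s = Max {r. r < i \<and> (r = 0 \<or> \<theta> r \<noteq> \<theta> i)}"
  have fin: "finite {r. r < i \<and> (r = 0 \<or> \<theta> r \<noteq> \<theta> i)}" by simp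
  have "s \<in> {r. r < i \<and> (r = 0 \<or> \<theta> r \<noteq> \<theta> i)}"
    unfolding s_def using i by (intro Max_in fin) (auto intro!: exI[of _ 0])
  then have si: "s < i" and s: "s = 0 \<or> \<theta> s \<noteq> \<theta> i" by auto
  have level: "\<theta> r = \<theta> i" if "s < r" "r \<le> i" for r
    using Max_ge[OF fin, of r] that unfolding s_def[symmetric] by (cases "r = i") auto
  define \<delta> where "\<delta> = (if s = 0 then 1 else \<theta> i - \<theta> s)"
  have "\<theta> s \<le> \<theta> i" if "s \<noteq> 0" using mono that si i by (simp add: Theta_mono_def)
  then have "\<delta> > 0" using s by (auto simp: \<delta>_def)
  have "-1 * (sum X {s<..i} - real (i - s) * \<theta> i) \<le> 0"
  proof (rule minimizer_interval_first_order[OF min \<open>\<delta> > 0\<close> i(2) level])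
    fix \<epsilon> :: real assume \<epsilon>: "0 < \<epsilon>" "\<epsilon> < \<delta>"
    have "i = n \<or> \<theta> i \<le> \<theta> (Suc i)" using mono i by (cases "i = n") (auto simp: Theta_mono_def)
    then show "(\<lambda>r. if s < r \<and> r \<le> i then \<theta> i + -1 * \<epsilon> else \<theta> r) \<in> Theta_mono n"
      using \<epsilon> by (intro Theta_mono_replace_interval[OF mono]) (auto simp: \<delta>_def split: if_splits)
  qed
  then show ?thesis using si by (intro exI[of _ s]) (simp add: avg_ge_iff)
qed

lemma isotonic_minimizer_ge_avg_right:
  assumes min: "is_minimizer n X (Theta_mono n) \<theta>" and i: "1 \<le> i" "i < n"
  shows "\<exists>t>i. t \<le> n \<and> avg X i t \<le> \<theta> (Suc i)"
proof -
  have mono: "\<theta> \<in> Theta_mono n" using min by (simp add: is_minimizer_def)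
  define t where "t = Min {r. i < r \<and> r \<le> n \<and> (r = n \<or> \<theta> (Suc r) \<noteq> \<theta> (Suc i))}"
  have fin: "finite {r. i < r \<and> r \<le> n \<and> (r = n \<or> \<theta> (Suc r) \<noteq> \<theta> (Suc i))}" by simp
  have "t \<in> {r. i < r \<and> r \<le> n \<and> (r = n \<or> \<theta> (Suc r) \<noteq> \<theta> (Suc i))}"
    unfolding t_def using i by (intro Min_in fin) (auto intro!: exI[of _ n])
  then have it: "i < t" "t \<le> n" and t: "t = n \<or> \<theta> (Suc t) \<noteq> \<theta> (Suc i)" by auto
  have level: "\<theta> r = \<theta> (Suc i)" if "i < r" "r \<le> t" for r
  proof (cases "r = Suc i")
    case False
    then have "r - 1 \<notin> {r. i < r \<and> r \<le> n \<and> (r = n \<or> \<theta> (Suc r) \<noteq> \<theta> (Suc i))}"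
      using Min_le[OF fin, of "r - 1"] that unfolding t_def[symmetric] by fastforce
    then show ?thesis using that False it by auto
  qed simp
  define \<delta> where "\<delta> = (if t = n then 1 else \<theta> (Suc t) - \<theta> (Suc i))"
  have "\<theta> (Suc i) \<le> \<theta> (Suc t)" if "t \<noteq> n" using mono that it by (simp add: Theta_mono_def)
  then have "\<delta> > 0" using t by (auto simp: \<delta>_def)
  have "1 * (sum X {i<..t} - real (t - i) * \<theta> (Suc i)) \<le> 0"
  proof (rule minimizer_interval_first_order[OF min \<open>\<delta> > 0\<close> it(2) level])
    fix \<epsilon> :: real assume \<epsilon>: "0 < \<epsilon>" "\<epsilon> < \<delta>"
    have "\<theta> i \<le> \<theta> (Suc i)" using mono i by (simp add: Theta_mono_def)
    then show "(\<lambda>r. if i < r \<and> r \<le> t then \<theta> (Suc i) + 1 * \<epsilon> else \<theta> r) \<in> Theta_mono n"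
      using \<epsilon> by (intro Theta_mono_replace_interval[OF mono]) (auto simp: \<delta>_def split: if_splits)
  qed
  then show ?thesis using it by (intro exI[of _ t]) (simp add: avg_le_iff)
qed

lemma isotonic_minimizer_jump:
  assumes min: "is_minimizer n X (Theta_mono n) \<theta>" and i: "1 \<le> i" "i < n"
    and left: "\<forall>s<i. avg X s i < c" and right: "\<forall>t. i < t \<longrightarrow> t \<le> n \<longrightarrow> c < avg X i t"
  shows "\<theta> i < c" "c < \<theta> (Suc i)"
proof -
  obtain s where "s < i" "\<theta> i \<le> avg X s i"
    using isotonic_minimizer_le_avg_left[OF min i(1)] i by auto
  then show "\<theta> i < c" using left by fastforce
  obtain t where "i < t" "t \<le> n" "avg X i t \<le> \<theta> (Suc i)"
    using isotonic_minimizer_ge_avg_right[OF min i] by auto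
  then show "c < \<theta> (Suc i)" using right by fastforce
qed

definition constant_on_blocks :: "nat \<Rightarrow> (nat \<Rightarrow> nat) \<Rightarrow> (nat \<Rightarrow> real) \<Rightarrow> (nat \<Rightarrow> real) \<Rightarrow> bool" where
  "constant_on_blocks m c \<nu> \<theta> \<longleftrightarrow> (\<forall>j\<in>{1..m}. \<forall>i\<in>{c (j - 1)<..c j}. \<theta> i = \<nu> j)"

lemma partition_mono:
  assumes "\<forall>j<m. c j \<le> c (Suc j)" "x \<le> y" "y \<le> m"
  shows "c x \<le> (c y :: 'a::order)"
  by (rule lift_Suc_mono_le_ivl[of "{..<m}"]) (use assms in auto)

lemma partition_blocks_disjoint:
  fixes c :: "nat \<Rightarrow> nat"
  assumes mono: "\<forall>j<m. c j \<le> c (Suc j)" and "j \<in> {1..m}" "j' \<in> {1..m}"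
    and "i \<in> {c (j - 1)<..c j}" "i \<in> {c (j' - 1)<..c j'}"
  shows "j = j'"
proof (rule ccontr)
  assume "j \<noteq> j'"
  then consider "j < j'" | "j' < j" by linarith
  then show False
  proof cases
    case 1
    have "c j \<le> c (j' - 1)" by (rule partition_mono[OF mono]) (use 1 assms in auto)
    then show False using assms by auto
  next
    case 2
    have "c j' \<le> c (j - 1)" by (rule partition_mono[OF mono]) (use 2 assms in auto)
    then show False using assms by auto
  qed
qed

lemma partition_block_exists:
  fixes c :: "nat \<Rightarrow> nat"
  assumes "c 0 = 0" "c m = n" "1 \<le> i" "i \<le> n"
  shows "\<exists>j\<in>{1..m}. c (j - 1) < i \<and> i \<le> c j"
proof -
  define j where "j = (LEAST j. i \<le> c j)"
  have "i \<le> c j" unfolding j_def by (rule LeastI[of _ m]) (use assms in simp)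
  moreover have "j \<le> m" unfolding j_def by (rule Least_le) (use assms in simp)
  moreover have "j \<noteq> 0" using \<open>i \<le> c j\<close> assms by (intro notI) simp
  moreover have "\<not> i \<le> c (j - 1)"
    unfolding j_def by (rule not_less_Least) (use \<open>j \<noteq> 0\<close> in \<open>simp add: j_def\<close>)
  ultimately show ?thesis by force
qed

text \<open>The definition of \<open>Theta_up n k\<close> asks for exactly \<open>k\<close> pieces; a partition into
  \<open>m \<le> k\<close> pieces is padded with empty ones.\<close>
lemma Theta_upI:
  assumes "1 \<le> m" "m \<le> k" "c 0 = 0" "c m = n" "\<forall>j<m. c j \<le> c (Suc j)"
    "\<forall>j\<in>{1..<m}. \<nu> j \<le> \<nu> (Suc j)" "constant_on_blocks m c \<nu> \<theta>"
  shows "\<theta> \<in> Theta_up n k"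
proof -
  define c' where "c' j = (if j \<le> m then c j else n)" for j
  define \<nu>' where "\<nu>' j = \<nu> (min j m)" for j
  have "c' 0 = 0" "c' k = n" using assms by (auto simp: c'_def)
  moreover have "\<forall>j<k. c' j \<le> c' (Suc j)"
    using assms partition_mono[of m c _ m] by (auto simp: c'_def)
  moreover have "\<forall>j\<in>{1..<k}. \<nu>' j \<le> \<nu>' (Suc j)"
    using assms by (auto simp: \<nu>'_def min_def) (metis le_antisym not_less_eq_eq order.refl)
  moreover have "\<forall>j\<in>{1..k}. \<forall>i\<in>{c' (j - 1)<..c' j}. \<theta> i = \<nu>' j"
  proof (intro ballI)
    fix j i assume j: "j \<in> {1..k}" and i: "i \<in> {c' (j - 1)<..c' j}"
    show "\<theta> i = \<nu>' j"
    proof (cases "j \<le> m")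
      case True
      moreover have "j - 1 \<le> m" using True by simp
      ultimately have "i \<in> {c (j - 1)<..c j}" using i by (simp add: c'_def)
      then show ?thesis using True j assms(7) by (simp add: \<nu>'_def constant_on_blocks_def)
    next
      case False
      then have "c' (j - 1) = n" using assms(4) by (cases "j - 1 = m") (auto simp: c'_def)
      then show ?thesis using False i by (simp add: c'_def)
    qed
  qed
  ultimately show ?thesis unfolding Theta_up_def by blast
qed

lemma Theta_up_subset_Theta_mono: "Theta_up n k \<subseteq> Theta_mono n"
proof
  fix \<theta> assume "\<theta> \<in> Theta_up n k"
  then obtain c \<nu> where c: "c 0 = 0" "c k = n" "\<forall>j<k. c j \<le> c (Suc j)"
    and \<nu>: "\<forall>j\<in>{1..<k}. \<nu> j \<le> \<nu> (Suc j)"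
    and blocks: "\<forall>j\<in>{1..k}. \<forall>i\<in>{c (j - 1)<..c j}. \<theta> i = \<nu> j"
    unfolding Theta_up_def by blast
  show "\<theta> \<in> Theta_mono n"
    unfolding Theta_mono_def
  proof (intro CollectI allI impI)
    fix i i' assume i: "1 \<le> i" "i \<le> i'" "i' \<le> n"
    obtain j where j: "j \<in> {1..k}" "c (j - 1) < i" "i \<le> c j"
      using partition_block_exists[OF c(1,2), of i] i by auto
    obtain j' where j': "j' \<in> {1..k}" "c (j' - 1) < i'" "i' \<le> c j'"
      using partition_block_exists[OF c(1,2), of i'] i by auto
    have "j \<le> j'"
    proof (rule ccontr)
      assume "\<not> j \<le> j'"
      then have "c j' \<le> c (j - 1)" using j j' by (auto intro: partition_mono[OF c(3)])
      then show False using i j j' by linarith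
    qed
    have "\<nu> j \<le> \<nu> j'"
      by (rule lift_Suc_mono_le_ivl[of "{1..<k}"]) (use \<open>j \<le> j'\<close> j(1) j'(1) \<nu> in auto)
    moreover have "\<theta> i = \<nu> j" "\<theta> i' = \<nu> j'" using blocks j j' by auto
    ultimately show "\<theta> i \<le> \<theta> i'" by simp
  qed
qed

lemma card_block_ends_Theta_up:
  assumes "\<theta> \<in> Theta_up n k"
  shows "card (block_ends n \<theta>) \<le> k"
proof -
  obtain c \<nu> where c: "c 0 = 0" "c k = n" "\<forall>j<k. c j \<le> c (Suc j)"
    and blocks: "\<forall>j\<in>{1..k}. \<forall>i\<in>{c (j - 1)<..c j}. \<theta> i = \<nu> j"
    using assms unfolding Theta_up_def by blast
  have "block_ends n \<theta> \<subseteq> c ` {1..k}"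
  proof
    fix i assume i: "i \<in> block_ends n \<theta>"
    then have "1 \<le> i" "i \<le> n" by (auto simp: block_ends_def)
    then obtain j where j: "j \<in> {1..k}" "c (j - 1) < i" "i \<le> c j"
      using partition_block_exists[OF c(1,2)] by force
    have "i = c j"
    proof (rule ccontr)
      assume "i \<noteq> c j"
      then have "Suc i \<in> {c (j - 1)<..c j}" using j by auto
      moreover have "i \<noteq> n" using \<open>i \<noteq> c j\<close> j partition_mono[OF c(3), of j k] c(2) by auto
      ultimately show False using i j blocks by (auto simp: block_ends_def)
    qed
    then show "i \<in> c ` {1..k}" using j by blast
  qed
  then have "card (block_ends n \<theta>) \<le> card (c ` {1..k})" by (intro card_mono) auto
  also have "\<dots> \<le> k" using card_image_le[of "{1..k}" c] by simp
  finally show ?thesis .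
qed

lemma constant_on_blocks_shift_breakpoint:
  assumes mono: "\<forall>i<m. c i \<le> c (Suc i)" and blocks: "constant_on_blocks m c \<nu> \<theta>"
    and j: "1 \<le> j" "j < m" and p: "c (j - 1) \<le> p" "p \<le> c (Suc j)"
  shows "constant_on_blocks m (c(j := p)) \<nu>
           (\<lambda>i. if p < i \<and> i \<le> c j then \<nu> (Suc j) else if c j < i \<and> i \<le> p then \<nu> j else \<theta> i)"
  unfolding constant_on_blocks_def
proof (intro ballI)
  fix j' i assume j': "j' \<in> {1..m}" and i: "i \<in> {(c(j := p)) (j' - 1)<..(c(j := p)) j'}"
  have cj: "c (j - 1) \<le> c j" "c j \<le> c (Suc j)" using mono j by (auto intro: partition_mono[OF mono])
  consider "j' = j" | "j' = Suc j" | "j' < j" | "Suc j < j'" by linarith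
  then show "(if p < i \<and> i \<le> c j then \<nu> (Suc j) else if c j < i \<and> i \<le> p then \<nu> j else \<theta> i) = \<nu> j'"
  proof cases
    case 1
    moreover have "j - 1 \<noteq> j" using j by simp
    ultimately have i': "c (j - 1) < i" "i \<le> p" using i by auto
    show ?thesis
    proof (cases "i \<le> c j")
      case True
      then have "\<theta> i = \<nu> j" using i' j blocks by (simp add: constant_on_blocks_def)
      then show ?thesis using 1 True i' by simp
    next
      case False
      then show ?thesis using 1 i' by simp
    qed
  next
    case 2
    then show ?thesis using i j blocks j' by (auto simp: constant_on_blocks_def)
  next
    case 3
    then have "c j' \<le> c (j - 1)" using mono j by (auto intro: partition_mono[OF mono])
    moreover have "j' - 1 \<noteq> j" using 3 by simp
    ultimately show ?thesis using 3 i j' blocks p cj by (auto simp: constant_on_blocks_def)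
  next
    case 4
    then have "c (Suc j) \<le> c (j' - 1)" using mono j' by (auto intro: partition_mono[OF mono])
    moreover have "j' - 1 \<noteq> j" using 4 by simp
    ultimately show ?thesis using 4 i j' blocks p cj by (auto simp: constant_on_blocks_def)
  qed
qed

locale strict_partition =
  fixes n m :: nat and a :: "nat \<Rightarrow> nat"
  assumes a0: "a 0 = 0" and am: "a m = n" and a_strict: "\<forall>j<m. a j < a (Suc j)"
begin

lemma a_less: "x < y \<Longrightarrow> y \<le> m \<Longrightarrow> a x < a y"
  by (rule lift_Suc_mono_less_ivl[of "{..<m}"]) (use a_strict in auto)

lemma a_less_iff: "x \<le> m \<Longrightarrow> y \<le> m \<Longrightarrow> a x < a y \<longleftrightarrow> x < y"
  using a_less by (metis leD linorder_neqE_nat order.strict_implies_order)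

lemma a_mono: "\<forall>j<m. a j \<le> a (Suc j)"
  using a_strict by (simp add: less_imp_le)

lemma a_le_n: "j \<le> m \<Longrightarrow> a j \<le> n"
  using partition_mono[OF a_mono, of j m] am by simp

end

locale block_ends_enumeration = strict_partition +
  fixes \<theta> :: "nat \<Rightarrow> real"
  assumes a_image: "a ` {1..m} = block_ends n \<theta>"
begin

lemma blocks_constant: "constant_on_blocks m a (\<lambda>j. \<theta> (a j)) \<theta>"
  unfolding constant_on_blocks_def
proof (intro ballI)
  fix j i assume j: "j \<in> {1..m}" and i: "i \<in> {a (j - 1)<..a j}"
  have step: "\<theta> r = \<theta> (Suc r)" if r: "r \<in> {a (j - 1)<..<a j}" for r
  proof -
    have "r \<notin> a ` {1..m}"
    proof
      assume "r \<in> a ` {1..m}"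
      then obtain j' where j': "j' \<in> {1..m}" "r = a j'" by blast
      then have "j - 1 < j'" "j' < j" using r j a_less_iff[of "j - 1" j'] a_less_iff[of j' j] by auto
      then show False by simp
    qed
    moreover have "r < n" using r j a_less_iff[of j m] am by (cases "j = m") auto
    ultimately show ?thesis using r a_image by (auto simp: block_ends_def)
  qed
  have "\<theta> i \<le> \<theta> (a j)" by (rule lift_Suc_mono_le_ivl[of "{a (j - 1)<..<a j}"]) (use step i in auto)
  moreover have "\<theta> (a j) \<le> \<theta> i" by (rule lift_Suc_antimono_le_ivl[of "{a (j - 1)<..<a j}"]) (use step i in auto)
  ultimately show "\<theta> i = \<theta> (a j)" by simp
qed

lemma jump_at_block_ends:
  assumes "j \<in> {1..<m}"
  shows "\<theta> (a j) \<noteq> \<theta> (Suc (a j))"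
proof -
  have "a j \<in> block_ends n \<theta>" using a_image assms by auto
  moreover have "a j \<noteq> n" using a_less[of j m] am assms by auto
  ultimately show ?thesis by (simp add: block_ends_def)
qed

lemma levels_strict_if_mono:
  assumes mono: "\<theta> \<in> Theta_mono n" and j: "j \<in> {1..<m}"
  shows "\<theta> (a j) < \<theta> (a (Suc j))"
proof -
  have "a 0 < a j" "a j < a (Suc j)" using j a_less by auto
  moreover have "a (Suc j) \<le> a m" using j a_less[of "Suc j" m] by (cases "Suc j = m") auto
  ultimately have "\<theta> (a j) \<le> \<theta> (Suc (a j))" using mono a0 am by (simp add: Theta_mono_def)
  moreover have "\<theta> (Suc (a j)) = \<theta> (a (Suc j))"
    using blocks_constant \<open>a j < a (Suc j)\<close> j unfolding constant_on_blocks_def by auto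
  ultimately show ?thesis using jump_at_block_ends[OF j] by simp
qed

lemma card_block_ends: "card (block_ends n \<theta>) = m"
proof -
  have "inj_on a {1..m}" by (rule inj_onI) (metis a_less_iff atLeastAtMost_iff linorder_neqE_nat less_irrefl)
  then show ?thesis using a_image[symmetric] by (simp add: card_image)
qed

lemma block_ends_subset:
  assumes jumps: "\<forall>j\<in>{1..<m}. \<theta>' (a j) < \<theta>' (Suc (a j))"
  shows "block_ends n \<theta> \<subseteq> block_ends n \<theta>'"
proof
  fix x assume "x \<in> block_ends n \<theta>"
  then obtain j where j: "j \<in> {1..m}" and x: "x = a j" using a_image by blast
  have "1 \<le> x" "x \<le> n" using j x a_less[of 0 j] a_le_n a0 by auto
  moreover have "x = n \<or> \<theta>' x \<noteq> \<theta>' (Suc x)"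
  proof (cases "j = m")
    case False
    then have "\<theta>' x < \<theta>' (Suc x)" using jumps j x by auto
    then show ?thesis by simp
  qed (use x am in simp)
  ultimately show "x \<in> block_ends n \<theta>'" by (simp add: block_ends_def)
qed

end

text \<open>Shifting a whole block stays admissible as long as the shift is smaller than the
  smallest gap between consecutive levels.\<close>
lemma minimizer_block_sum:
  assumes min: "is_minimizer n X (Theta_up n k) \<theta>" and "m \<le> k"
    and c: "c 0 = 0" "c m = n" "\<forall>j<m. c j \<le> c (Suc j)"
    and \<nu>: "\<forall>j\<in>{1..<m}. \<nu> j < \<nu> (Suc j)" and blocks: "constant_on_blocks m c \<nu> \<theta>"
    and j: "j \<in> {1..m}"
  shows "sum X {c (j - 1)<..c j} = real (c j - c (j - 1)) * \<nu> j"
proof -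
  define \<delta> where "\<delta> = Min ((\<lambda>i. \<nu> (Suc i) - \<nu> i) ` {1..<m} \<union> {1})"
  have "\<delta> > 0" using \<nu> by (simp add: \<delta>_def)
  have gap: "\<delta> \<le> \<nu> (Suc i) - \<nu> i" if "i \<in> {1..<m}" for i
    unfolding \<delta>_def by (rule Min_le) (use that in auto)
  have "\<sigma> * (sum X {c (j - 1)<..c j} - real (c j - c (j - 1)) * \<nu> j) \<le> 0"
    if \<sigma>: "\<sigma> = 1 \<or> \<sigma> = -1" for \<sigma> :: real
  proof (rule minimizer_interval_first_order[OF min \<open>\<delta> > 0\<close>])
    show "c j \<le> n" using c j partition_mono[of m c j m] by auto
    show "\<theta> i = \<nu> j" if "c (j - 1) < i" "i \<le> c j" for i
      using that j blocks by (auto simp: constant_on_blocks_def)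
    fix \<epsilon> :: real assume \<epsilon>: "0 < \<epsilon>" "\<epsilon> < \<delta>"
    show "(\<lambda>i. if c (j - 1) < i \<and> i \<le> c j then \<nu> j + \<sigma> * \<epsilon> else \<theta> i) \<in> Theta_up n k"
    proof (rule Theta_upI[OF _ \<open>m \<le> k\<close> c, where \<nu> = "\<nu>(j := \<nu> j + \<sigma> * \<epsilon>)"])
      show "1 \<le> m" using j by simp
      show "\<forall>i\<in>{1..<m}. (\<nu>(j := \<nu> j + \<sigma> * \<epsilon>)) i \<le> (\<nu>(j := \<nu> j + \<sigma> * \<epsilon>)) (Suc i)"
        using gap \<epsilon> \<sigma> by force
      show "constant_on_blocks m c (\<nu>(j := \<nu> j + \<sigma> * \<epsilon>))
              (\<lambda>i. if c (j - 1) < i \<and> i \<le> c j then \<nu> j + \<sigma> * \<epsilon> else \<theta> i)"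
        unfolding constant_on_blocks_def
      proof (intro ballI)
        fix j' i assume j': "j' \<in> {1..m}" and i: "i \<in> {c (j' - 1)<..c j'}"
        have "i \<in> {c (j - 1)<..c j} \<longleftrightarrow> j' = j"
          using partition_blocks_disjoint[OF c(3) j j' _ i] i by auto
        then show "(if c (j - 1) < i \<and> i \<le> c j then \<nu> j + \<sigma> * \<epsilon> else \<theta> i)
                     = (\<nu>(j := \<nu> j + \<sigma> * \<epsilon>)) j'"
          using blocks j' i by (auto simp: constant_on_blocks_def)
      qed
    qed
  qed
  from this[of 1] this[of "-1"] show ?thesis by simp
qed

locale Theta_up_block_minimizer = strict_partition +
  fixes k :: nat and X \<theta> :: "nat \<Rightarrow> real"
  assumes minimizer: "is_minimizer n X (Theta_up n k) \<theta>"
    and m_le_k: "m \<le> k"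
    and blocks: "constant_on_blocks m a (\<lambda>j. \<theta> (a j)) \<theta>"
    and levels_strict: "\<forall>j\<in>{1..<m}. \<theta> (a j) < \<theta> (a (Suc j))"
begin

lemma block_sum: "j \<in> {1..m} \<Longrightarrow> sum X {a (j - 1)<..a j} = real (a j - a (j - 1)) * \<theta> (a j)"
  using minimizer_block_sum[OF minimizer m_le_k a0 am a_mono _ blocks] levels_strict by blast

lemma block_value: "j \<in> {1..m} \<Longrightarrow> a (j - 1) < i \<Longrightarrow> i \<le> a j \<Longrightarrow> \<theta> i = \<theta> (a j)"
  using blocks greaterThanAtMost_iff unfolding constant_on_blocks_def by blast

lemma value_eq_block_avg:
  assumes "j \<in> {1..m}" "i \<in> {a (j - 1)<..a j}"
  shows "\<theta> i = avg X (a (j - 1)) (a j)"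
proof -
  have "a (j - 1) < a j" using a_strict[rule_format, of "j - 1"] assms by auto
  then show ?thesis using block_sum[OF assms(1)] block_value[OF assms(1), of i] assms(2)
    by (simp add: avg_def)
qed

text \<open>Moving the breakpoint \<open>a j\<close> to \<open>p\<close> gives a competitor in \<open>Theta_up n k\<close>; if it is
  as good as \<open>\<theta>\<close>, it is a minimizer too and inherits the block-mean property.\<close>
lemma shift_breakpoint:
  assumes j: "1 \<le> j" "j < m" and p: "a (j - 1) \<le> p" "p \<le> a (Suc j)"
    and \<theta>': "\<theta>' = (\<lambda>i. if p < i \<and> i \<le> a j then \<theta> (a (Suc j))
                     else if a j < i \<and> i \<le> p then \<theta> (a j) else \<theta> i)"
  shows "sqdist n X \<theta> \<le> sqdist n X \<theta>'"
    and "sqdist n X \<theta>' = sqdist n X \<theta> \<Longrightarrow> j' \<in> {1..m} \<Longrightarrow>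
           sum X {(a(j := p)) (j' - 1)<..(a(j := p)) j'}
             = real ((a(j := p)) j' - (a(j := p)) (j' - 1)) * \<theta> (a j')"
proof -
  have c: "(a(j := p)) 0 = 0" "(a(j := p)) m = n" "\<forall>i<m. (a(j := p)) i \<le> (a(j := p)) (Suc i)"
    using j p a0 am a_mono by (auto simp: nat_less_le)
  have blocks': "constant_on_blocks m (a(j := p)) (\<lambda>j. \<theta> (a j)) \<theta>'"
    unfolding \<theta>' by (rule constant_on_blocks_shift_breakpoint[OF a_mono blocks j p])
  have "\<theta>' \<in> Theta_up n k"
    by (rule Theta_upI[OF _ m_le_k c _ blocks']) (use j levels_strict in \<open>auto simp: less_imp_le\<close>)
  then show le: "sqdist n X \<theta> \<le> sqdist n X \<theta>'" using minimizer by (simp add: is_minimizer_def)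
  assume "sqdist n X \<theta>' = sqdist n X \<theta>" "j' \<in> {1..m}"
  moreover from this have "is_minimizer n X (Theta_up n k) \<theta>'"
    using minimizer \<open>\<theta>' \<in> Theta_up n k\<close> by (simp add: is_minimizer_def)
  ultimately show "sum X {(a(j := p)) (j' - 1)<..(a(j := p)) j'}
                     = real ((a(j := p)) j' - (a(j := p)) (j' - 1)) * \<theta> (a j')"
    using minimizer_block_sum[OF _ m_le_k c _ blocks'] levels_strict by blast
qed

lemma sum_before_breakpoint_base:
  assumes j: "1 \<le> j" "j < m" and s: "a (j - 1) \<le> s" "s < a j"
  shows "sum X {s<..a j} < real (a j - s) * ((\<theta> (a j) + \<theta> (a (Suc j))) / 2)"
proof -
  define \<mu> \<mu>' where "\<mu> = \<theta> (a j)" and "\<mu>' = \<theta> (a (Suc j))"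
  define \<theta>' where "\<theta>' = (\<lambda>i. if s < i \<and> i \<le> a j then \<mu>' else if a j < i \<and> i \<le> s then \<mu> else \<theta> i)"
  define S L where "S = sum X {s<..a j}" and "L = real (a j - s)"
  have jm: "j \<in> {1..m}" "Suc j \<in> {1..m}" using j by auto
  have "\<mu> < \<mu>'" using levels_strict j by (simp add: \<mu>_def \<mu>'_def)
  have aj: "a j < a (Suc j)" "a (Suc j) \<le> n" using a_strict a_le_n j by auto
  have val: "\<theta> i = \<mu>" if "s < i" "i \<le> a j" for i
    unfolding \<mu>_def by (rule block_value[OF jm(1)]) (use that s in auto)
  have "sqdist n X \<theta>' - sqdist n X \<theta> = (\<Sum>i\<in>{s<..a j}. (X i - \<mu>')\<^sup>2 - (X i - \<mu>)\<^sup>2)"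
    using aj s by (subst sqdist_diff[of "{s<..a j}"]) (auto simp: \<theta>'_def val intro!: sum.cong)
  also have "\<dots> = (\<mu> - \<mu>') * (2 * S - L * (\<mu> + \<mu>'))"
    unfolding S_def L_def by (rule sum_square_diff_const)
  finally have diff: "sqdist n X \<theta>' - sqdist n X \<theta> = (\<mu> - \<mu>') * (2 * S - L * (\<mu> + \<mu>'))" .
  have "2 * S \<noteq> L * (\<mu> + \<mu>')"
  proof
    assume eq: "2 * S = L * (\<mu> + \<mu>')"
    then have "sqdist n X \<theta>' = sqdist n X \<theta>" using diff by simp
    from shift_breakpoint(2)[OF j s(1) _ \<theta>'_def[unfolded \<mu>_def \<mu>'_def] this jm(2)]
    have "sum X {s<..a (Suc j)} = real (a (Suc j) - s) * \<mu>'"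
      using aj s by (simp add: \<mu>'_def)
    moreover have "sum X {s<..a (Suc j)} = S + sum X {a j<..a (Suc j)}"
      unfolding S_def using aj s by (intro sum_greaterThanAtMost_split) auto
    moreover have "sum X {a j<..a (Suc j)} = real (a (Suc j) - a j) * \<mu>'"
      using block_sum[OF jm(2)] by (simp add: \<mu>'_def)
    ultimately have "S = L * \<mu>'"
      using aj s by (simp add: L_def of_nat_diff algebra_simps)
    moreover have "L * \<mu> < L * \<mu>'" using \<open>\<mu> < \<mu>'\<close> s by (simp add: L_def)
    moreover have "2 * S = L * \<mu> + L * \<mu>'" using eq by (simp add: distrib_left)
    ultimately show False by linarith
  qed
  moreover have "sqdist n X \<theta> \<le> sqdist n X \<theta>'"
    using aj s by (intro shift_breakpoint(1)[OF j s(1) _ \<theta>'_def[unfolded \<mu>_def \<mu>'_def]]) auto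
  then have "0 \<le> (\<mu> - \<mu>') * (2 * S - L * (\<mu> + \<mu>'))" using diff by linarith
  then have "2 * S - L * (\<mu> + \<mu>') \<le> 0" using \<open>\<mu> < \<mu>'\<close> by (simp add: zero_le_mult_iff)
  ultimately have "2 * S < L * (\<mu> + \<mu>')" by linarith
  then show ?thesis by (simp add: S_def L_def \<mu>_def \<mu>'_def)
qed

lemma sum_after_breakpoint_base:
  assumes j: "1 \<le> j" "j < m" and t: "a j < t" "t \<le> a (Suc j)"
  shows "real (t - a j) * ((\<theta> (a j) + \<theta> (a (Suc j))) / 2) < sum X {a j<..t}"
proof -
  define \<mu> \<mu>' where "\<mu> = \<theta> (a j)" and "\<mu>' = \<theta> (a (Suc j))"
  define \<theta>' where "\<theta>' = (\<lambda>i. if t < i \<and> i \<le> a j then \<mu>' else if a j < i \<and> i \<le> t then \<mu> else \<theta> i)"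
  define S L where "S = sum X {a j<..t}" and "L = real (t - a j)"
  have jm: "j \<in> {1..m}" "Suc j \<in> {1..m}" "j - 1 \<noteq> j" using j by auto
  have "\<mu> < \<mu>'" using levels_strict j by (simp add: \<mu>_def \<mu>'_def)
  have aj: "a (j - 1) < a j" "a (Suc j) \<le> n" using a_strict[rule_format, of "j - 1"] a_le_n j by auto
  have val: "\<theta> i = \<mu>'" if "a j < i" "i \<le> t" for i
    unfolding \<mu>'_def by (rule block_value[OF jm(2)]) (use that t in auto)
  have "sqdist n X \<theta>' - sqdist n X \<theta> = (\<Sum>i\<in>{a j<..t}. (X i - \<mu>)\<^sup>2 - (X i - \<mu>')\<^sup>2)"
    using aj t by (subst sqdist_diff[of "{a j<..t}"]) (auto simp: \<theta>'_def val intro!: sum.cong)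
  also have "\<dots> = (\<mu>' - \<mu>) * (2 * S - L * (\<mu>' + \<mu>))"
    unfolding S_def L_def by (rule sum_square_diff_const)
  finally have diff: "sqdist n X \<theta>' - sqdist n X \<theta> = (\<mu>' - \<mu>) * (2 * S - L * (\<mu>' + \<mu>))" .
  have "2 * S \<noteq> L * (\<mu>' + \<mu>)"
  proof
    assume eq: "2 * S = L * (\<mu>' + \<mu>)"
    then have "sqdist n X \<theta>' = sqdist n X \<theta>" using diff by simp
    from shift_breakpoint(2)[OF j _ t(2) \<theta>'_def[unfolded \<mu>_def \<mu>'_def] this jm(1)]
    have "sum X {a (j - 1)<..t} = real (t - a (j - 1)) * \<mu>"
      using aj t jm(3) by (simp add: \<mu>_def)
    moreover have "sum X {a (j - 1)<..t} = sum X {a (j - 1)<..a j} + S"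
      unfolding S_def using aj t by (intro sum_greaterThanAtMost_split) auto
    moreover have "sum X {a (j - 1)<..a j} = real (a j - a (j - 1)) * \<mu>"
      using block_sum[OF jm(1)] by (simp add: \<mu>_def)
    ultimately have "S = L * \<mu>"
      using aj t by (simp add: L_def of_nat_diff algebra_simps)
    moreover have "L * \<mu> < L * \<mu>'" using \<open>\<mu> < \<mu>'\<close> t by (simp add: L_def)
    moreover have "2 * S = L * \<mu>' + L * \<mu>" using eq by (simp add: distrib_left)
    ultimately show False by linarith
  qed
  moreover have "sqdist n X \<theta> \<le> sqdist n X \<theta>'"
    using aj t by (intro shift_breakpoint(1)[OF j _ t(2) \<theta>'_def[unfolded \<mu>_def \<mu>'_def]]) auto
  then have "0 \<le> (\<mu>' - \<mu>) * (2 * S - L * (\<mu>' + \<mu>))" using diff by linarith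
  then have "0 \<le> 2 * S - L * (\<mu>' + \<mu>)" using \<open>\<mu> < \<mu>'\<close> by (simp add: zero_le_mult_iff)
  ultimately have "L * (\<mu>' + \<mu>) < 2 * S" by linarith
  then show ?thesis by (simp add: S_def L_def \<mu>_def \<mu>'_def algebra_simps)
qed

text \<open>Away from the breakpoint, whole blocks are added whose means lie strictly on the
  correct side of the midpoint, since the levels increase strictly.\<close>
lemma sum_before_breakpoint:
  "1 \<le> j \<Longrightarrow> j < m \<Longrightarrow> s < a j \<Longrightarrow>
     sum X {s<..a j} < real (a j - s) * ((\<theta> (a j) + \<theta> (a (Suc j))) / 2)"
proof (induction j arbitrary: s)
  case 0
  then show ?case by simp
next
  case (Suc j)
  show ?case
  proof (cases "a j \<le> s")
    case True
    then show ?thesis using sum_before_breakpoint_base[of "Suc j" s] Suc.prems by simp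
  next
    case False
    have "j \<noteq> 0" using False a0 by (cases j) auto
    then have j: "1 \<le> j" "j < m" using Suc.prems by auto
    define M M' where "M = (\<theta> (a j) + \<theta> (a (Suc j))) / 2"
      and "M' = (\<theta> (a (Suc j)) + \<theta> (a (Suc (Suc j)))) / 2"
    have aj: "a j < a (Suc j)" using a_strict j by simp
    have "\<theta> (a j) < \<theta> (a (Suc j))" "\<theta> (a (Suc j)) < \<theta> (a (Suc (Suc j)))"
      using levels_strict j Suc.prems by auto
    then have M: "M \<le> M'" "\<theta> (a (Suc j)) < M'" by (auto simp: M_def M'_def)
    have "sum X {s<..a (Suc j)} = sum X {s<..a j} + sum X {a j<..a (Suc j)}"
      using False aj by (intro sum_greaterThanAtMost_split) auto
    also have "sum X {a j<..a (Suc j)} = real (a (Suc j) - a j) * \<theta> (a (Suc j))"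
      using block_sum[of "Suc j"] Suc.prems by simp
    also have "sum X {s<..a j} < real (a j - s) * M"
      using Suc.IH[OF j] False by (simp add: M_def)
    also have "real (a j - s) * M \<le> real (a j - s) * M'"
      using M by (intro mult_left_mono) auto
    also have "real (a (Suc j) - a j) * \<theta> (a (Suc j)) < real (a (Suc j) - a j) * M'"
      using M aj by (intro mult_strict_left_mono) auto
    also have "real (a j - s) * M' + real (a (Suc j) - a j) * M' = real (a (Suc j) - s) * M'"
      using False aj by (simp add: of_nat_diff algebra_simps)
    finally show ?thesis by (simp add: M'_def)
  qed
qed

lemma sum_after_breakpoint:
  "1 \<le> j \<Longrightarrow> j < m \<Longrightarrow> a j < t \<Longrightarrow> t \<le> n \<Longrightarrow>
     real (t - a j) * ((\<theta> (a j) + \<theta> (a (Suc j))) / 2) < sum X {a j<..t}"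
proof (induction "m - j" arbitrary: j rule: less_induct)
  case less
  show ?case
  proof (cases "t \<le> a (Suc j)")
    case True
    then show ?thesis using sum_after_breakpoint_base less.prems by simp
  next
    case False
    have "Suc j \<noteq> m" using False less.prems am by auto
    then have j: "1 \<le> Suc j" "Suc j < m" using less.prems by (auto intro: Suc_lessI)
    define M M' where "M = (\<theta> (a j) + \<theta> (a (Suc j))) / 2"
      and "M' = (\<theta> (a (Suc j)) + \<theta> (a (Suc (Suc j)))) / 2"
    have aj: "a j < a (Suc j)" using a_strict less.prems by simp
    have "\<theta> (a j) < \<theta> (a (Suc j))" "\<theta> (a (Suc j)) < \<theta> (a (Suc (Suc j)))"
      using levels_strict j less.prems by auto
    then have M: "M \<le> M'" "M < \<theta> (a (Suc j))" by (auto simp: M_def M'_def)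
    have "real (t - a j) * M = real (a (Suc j) - a j) * M + real (t - a (Suc j)) * M"
      using False aj by (simp add: of_nat_diff algebra_simps)
    also have "real (a (Suc j) - a j) * M < real (a (Suc j) - a j) * \<theta> (a (Suc j))"
      using M aj by (intro mult_strict_left_mono) auto
    also have "real (t - a (Suc j)) * M \<le> real (t - a (Suc j)) * M'"
      using M by (intro mult_left_mono) auto
    also have "real (a (Suc j) - a j) * \<theta> (a (Suc j)) = sum X {a j<..a (Suc j)}"
      using block_sum[of "Suc j"] j by simp
    also have "real (t - a (Suc j)) * M' < sum X {a (Suc j)<..t}"
      using less.hyps[of "Suc j"] j False less.prems by (simp add: M'_def)
    also have "sum X {a j<..a (Suc j)} + sum X {a (Suc j)<..t} = sum X {a j<..t}"
      using False aj by (intro sum_greaterThanAtMost_split[symmetric]) auto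
    finally show ?thesis by (simp add: M_def)
  qed
qed

lemma avg_before_breakpoint:
  assumes "j \<in> {1..<m}" "s < a j"
  shows "avg X s (a j) < (\<theta> (a j) + \<theta> (a (Suc j))) / 2"
  unfolding avg_less_iff[OF assms(2)] using sum_before_breakpoint assms by simp

lemma avg_after_breakpoint:
  assumes "j \<in> {1..<m}" "a j < t" "t \<le> n"
  shows "(\<theta> (a j) + \<theta> (a (Suc j))) / 2 < avg X (a j) t"
  unfolding avg_greater_iff[OF assms(2)] using sum_after_breakpoint assms by simp

lemma isotonic_fit_jumps_at_breakpoint:
  assumes iso: "is_minimizer n X (Theta_mono n) \<theta>'" and j: "j \<in> {1..<m}"
  shows "\<theta>' (a j) < (\<theta> (a j) + \<theta> (a (Suc j))) / 2"
    and "(\<theta> (a j) + \<theta> (a (Suc j))) / 2 < \<theta>' (Suc (a j))"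
proof -
  have i: "1 \<le> a j" "a j < n" using j a_less[of 0 j] a_less[of j m] a0 am by auto
  show "\<theta>' (a j) < (\<theta> (a j) + \<theta> (a (Suc j))) / 2"
    by (rule isotonic_minimizer_jump(1)[OF iso i])
      (use avg_before_breakpoint[OF j] avg_after_breakpoint[OF j] in auto)
  show "(\<theta> (a j) + \<theta> (a (Suc j))) / 2 < \<theta>' (Suc (a j))"
    by (rule isotonic_minimizer_jump(2)[OF iso i])
      (use avg_before_breakpoint[OF j] avg_after_breakpoint[OF j] in auto)
qed

end

lemma (in block_ends_enumeration) Theta_up_block_minimizer:
  assumes min: "is_minimizer n X (Theta_up n k) \<theta>"
  shows "Theta_up_block_minimizer n m a k X \<theta>"
proof unfold_locales
  have "\<theta> \<in> Theta_up n k" using min by (simp add: is_minimizer_def)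
  then show "m \<le> k" using card_block_ends_Theta_up card_block_ends by metis
  show "\<forall>j\<in>{1..<m}. \<theta> (a j) < \<theta> (a (Suc j))"
    using levels_strict_if_mono Theta_up_subset_Theta_mono \<open>\<theta> \<in> Theta_up n k\<close> by blast
qed (use min blocks_constant in auto)

theorem mainTheorem12:
  fixes n k m :: nat and X \<theta>k \<theta>n :: "nat \<Rightarrow> real" and a :: "nat \<Rightarrow> nat"
  assumes "1 \<le> k" and "k \<le> n"
    and "is_minimizer n X (Theta_up n k) \<theta>k"
    and "is_minimizer n X (Theta_mono n) \<theta>n"
    and "a 0 = 0" and "a m = n" and "\<forall>j<m. a j < a (Suc j)"
    and "a ` {1..m} = block_ends n \<theta>k"
  shows "(\<forall>j\<in>{1..m}. \<forall>i\<in>{a (j-1)<..a j}. \<theta>k i = avg X (a (j-1)) (a j))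
    \<and> (\<forall>j\<in>{1..m-1}.
         (\<forall>s t. s < a j \<longrightarrow> a j < t \<longrightarrow> t \<le> n \<longrightarrow>
            avg X s (a j) < (\<theta>k (a j) + \<theta>k (a (Suc j))) / 2 \<and>
            (\<theta>k (a j) + \<theta>k (a (Suc j))) / 2 < avg X (a j) t)
       \<and> \<theta>n (a j) < (\<theta>k (a j) + \<theta>k (a (Suc j))) / 2
       \<and> (\<theta>k (a j) + \<theta>k (a (Suc j))) / 2 < \<theta>n (Suc (a j)))
    \<and> block_ends n \<theta>k \<subseteq> block_ends n \<theta>n"
proof -
  interpret enum: block_ends_enumeration n m a \<theta>k
    using assms by unfold_locales
  interpret Theta_up_block_minimizer n m a k X \<theta>k
    by (rule enum.Theta_up_block_minimizer[OF assms(3)])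
  have ranges: "{1..m-1} = {1..<m}" by auto
  have "block_ends n \<theta>k \<subseteq> block_ends n \<theta>n"
    using isotonic_fit_jumps_at_breakpoint[OF assms(4)] by (intro enum.block_ends_subset) force
  then show ?thesis
    unfolding ranges
    using value_eq_block_avg avg_before_breakpoint avg_after_breakpoint
      isotonic_fit_jumps_at_breakpoint[OF assms(4)]
    by blast
qed

end
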